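(* Let $A$ be a vector space with a bilinear operation $\circ:A\otimes A\to A$ which is commutative, i.e. $x\circ y=y\circ x$ for all $x,y\in A$. Then $(A,\circ)$ is an anti-pre-Lie algebra if and only if $(A,\circ)$ is associative.
   Context: All vector spaces are finite-dimensional over a field $\mathbb F$ of characteristic $0$. An anti-pre-Lie algebra is a vector space $A$ with a bilinear operation $\circ$ such that, writing $[x,y]=x\circ y-y\circ x$, for all $x,y,z\in A$: (i) $x\circ(y\circ z)-y\circ(x\circ z)=[y,x]\circ z$, and (ii) $[x,y]\circ z+[y,z]\circ x+[z,x]\circ y=0$. *)

theory Defs
  imports Main "HOL.Vector_Spaces"
begin

definition bilinear_op :: "('f::field \<Rightarrow> 'a::ab_group_add \<Rightarrow> 'a) \<Rightarrow> ('a \<Rightarrow> 'a \<Rightarrow> 'a) \<Rightarrow> bool" where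
  "bilinear_op scale m \<longleftrightarrow>
     (\<forall>x y z. m (x + y) z = m x z + m y z) \<and>
     (\<forall>x y z. m x (y + z) = m x y + m x z) \<and>
     (\<forall>c x y. m (scale c x) y = scale c (m x y)) \<and>
     (\<forall>c x y. m x (scale c y) = scale c (m x y))"

definition commutator :: "('a::ab_group_add \<Rightarrow> 'a \<Rightarrow> 'a) \<Rightarrow> 'a \<Rightarrow> 'a \<Rightarrow> 'a" where
  "commutator m x y = m x y - m y x"

definition anti_pre_Lie :: "('a::ab_group_add \<Rightarrow> 'a \<Rightarrow> 'a) \<Rightarrow> bool" where
  "anti_pre_Lie m \<longleftrightarrow>
     (\<forall>x y z. m x (m y z) - m y (m x z) = m (commutator m y x) z) \<and>
     (\<forall>x y z. m (commutator m x y) z + m (commutator m y z) x + m (commutator m z x) y = 0)"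

definition associative_op :: "('a \<Rightarrow> 'a \<Rightarrow> 'a) \<Rightarrow> bool" where
  "associative_op m \<longleftrightarrow> (\<forall>x y z. m (m x y) z = m x (m y z))"

end

theory Submission
  imports Defs
begin

text \<open>For a commutative product the commutator vanishes, so axiom (ii) holds trivially and
  axiom (i) reduces to left commutativity \<open>x \<circ> (y \<circ> z) = y \<circ> (x \<circ> z)\<close>; for a commutative
  product, left commutativity and associativity are interchanged by commuting one factor.\<close>

lemma commutator_eq_0_if_commutative:
  assumes "\<forall>x y. m x y = m y x"
  shows "commutator m x y = 0"
  using assms by (simp add: commutator_def)

lemma left_zero_if_left_additive:
  fixes m :: "'a::ab_group_add \<Rightarrow> 'b::ab_group_add \<Rightarrow> 'b"
  assumes "\<forall>x y z. m (x + y) z = m x z + m y z"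
  shows "m 0 z = 0"
proof -
  have "m (0 + 0) z = m 0 z + m 0 z"
    using assms by blast
  then show ?thesis
    by simp
qed

lemma anti_pre_Lie_iff_left_commutative:
  fixes m :: "'a::ab_group_add \<Rightarrow> 'a \<Rightarrow> 'a"
  assumes comm: "\<forall>x y. m x y = m y x"
    and left_add: "\<forall>x y z. m (x + y) z = m x z + m y z"
  shows "anti_pre_Lie m \<longleftrightarrow> (\<forall>x y z. m x (m y z) = m y (m x z))"
  unfolding anti_pre_Lie_def commutator_eq_0_if_commutative[OF comm]
    left_zero_if_left_additive[OF left_add]
  by simp

lemma left_commutative_iff_associative_if_commutative:
  assumes comm: "\<forall>x y. m x y = m y x"
  shows "(\<forall>x y z. m x (m y z) = m y (m x z)) \<longleftrightarrow> associative_op m"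
  unfolding associative_op_def
proof (intro iffI allI)
  fix x y z
  assume left_comm: "\<forall>x y z. m x (m y z) = m y (m x z)"
  have "m (m x y) z = m z (m x y)" using comm by simp
  also have "\<dots> = m x (m z y)" using left_comm by simp
  also have "\<dots> = m x (m y z)" using comm by simp
  finally show "m (m x y) z = m x (m y z)" .
next
  fix x y z
  assume assoc: "\<forall>x y z. m (m x y) z = m x (m y z)"
  have "m x (m y z) = m (m x y) z" using assoc by simp
  also have "\<dots> = m (m y x) z" using comm by simp
  also have "\<dots> = m y (m x z)" using assoc by simp
  finally show "m x (m y z) = m y (m x z)" .
qed

theorem proposition2p6:
  fixes scale :: "'f::field_char_0 \<Rightarrow> 'a::ab_group_add \<Rightarrow> 'a"
    and m :: "'a \<Rightarrow> 'a \<Rightarrow> 'a"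
  assumes fdvs: "\<exists>B. finite_dimensional_vector_space scale B"
    and bil: "bilinear_op scale m"
    and comm: "\<forall>x y. m x y = m y x"
  shows "anti_pre_Lie m \<longleftrightarrow> associative_op m"
proof -
  have left_add: "\<forall>x y z. m (x + y) z = m x z + m y z"
    using bil unfolding bilinear_op_def by blast
  show ?thesis
    using anti_pre_Lie_iff_left_commutative[OF comm left_add]
      left_commutative_iff_associative_if_commutative[OF comm]
    by simp
qed

end
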